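(* Let $\mathcal{S}=\{(x_i,y_i)\}_{i=1}^N$ be a training set, $K$ a continuous, real-valued, symmetric, shift-invariant positive definite kernel on $\mathbb{R}^d$ with RKHS $\mathcal{H}$ and spectral probability measure $\mathbb{P}(\omega)$, $\lambda>0$, $L(u,y)$ a loss convex in $u$. Assume an optimal solution $f_*$ of $\min_{f\in\mathcal{H}}\mathbb{E}_{(x,y)\in\mathcal{S}}L(f(x),y)+\frac{\lambda}{2}\|f\|_{\mathcal{H}}^2$ exists, $|L'(u,y)|<M$ (derivative in the first argument), $L$ and $L'$ are $\mathcal{L}$-Lipschitz in the first argument, $K(x,x')\le\kappa$ for all $x,x'$, and $|\phi_\omega(x)\phi_\omega(x')|\le\phi$ for all $\omega,b,x,x'$. Let the step size satisfy $\frac{1}{\lambda}>\gamma>0$ and $C^2:=M^2(\sqrt{\kappa}+\sqrt{\phi})^2\gamma/\lambda$. With the quantities $g_t,\hat g_t,\bar g_t$, $\mathcal{M}_t,\mathcal{N}_t,\mathcal{R}_t$, $A_t$ defined in the context, $$\mathcal{M}_t\le 4\kappa M^2,\qquad \mathbb{E}_{\mathcal{D}_t,\omega_t}[\mathcal{N}_t]=0,\qquad \mathbb{E}_{\mathcal{D}_t,\omega_t}[\mathcal{R}_t]\le\kappa^{1/2}\mathcal{L}C\sqrt{\mathbb{E}_{\mathcal{D}_{t-1},\omega_{t-1}}[A_t]}.$$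
   Context: Random feature map: $\phi_\omega(x)=\sqrt{2}\cos(\omega^Tx+b)$ with $\omega\sim\mathbb{P}(\omega)$, $b\sim U[0,2\pi]$. Iterations with constant step size $\gamma$: $f_1=h_1=0$; at iteration $t$ draw $(x_t,y_t)$ uniformly from $\mathcal{S}$ and $(\omega_t,b_t)$ independently, and set $f_{t+1}=f_t-\gamma\big(L'(f_t(x_t),y_t)\phi_{\omega_t}(x_t)\phi_{\omega_t}(\cdot)+\lambda f_t\big)$, $h_{t+1}=h_t-\gamma g_t$ where $g_t=L'(f_t(x_t),y_t)K(x_t,\cdot)+\lambda h_t$. Further $\hat g_t=L'(h_t(x_t),y_t)K(x_t,\cdot)+\lambda h_t$ and $\bar g_t=\mathbb{E}_{(x_t,y_t)}[L'(h_t(x_t),y_t)K(x_t,\cdot)]+\lambda h_t$ (expectation over the data sample at iteration $t$ given the past). Define $\mathcal{M}_t=\|g_t\|_{\mathcal{H}}^2$, $\mathcal{N}_t=\langle h_t-f_*,\bar g_t-\hat g_t\rangle_{\mathcal{H}}$, $\mathcal{R}_t=\langle h_t-f_*,\hat g_t-g_t\rangle_{\mathcal{H}}$, $A_t=\|h_t-f_*\|_{\mathcal{H}}^2$. $\mathcal{D}_t$ denotes the data points sampled up to iteration $t$, and $\mathbb{E}_{\mathcal{D}_t,\omega_t}$ the expectation over data points and random features sampled up to iteration $t$. *)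

theory Defs
  imports "HOL-Probability.Probability"
begin

definition rf_feat :: "'a::euclidean_space \<Rightarrow> real \<Rightarrow> 'a \<Rightarrow> real" where
  "rf_feat \<omega> b x = sqrt 2 * cos (inner \<omega> x + b)"

definition pos_def_kernel :: "('a \<Rightarrow> 'a \<Rightarrow> real) \<Rightarrow> bool" where
  "pos_def_kernel K \<longleftrightarrow> (\<forall>(n::nat) (c::nat \<Rightarrow> real) (z::nat \<Rightarrow> 'a).
      (\<Sum>i<n. \<Sum>j<n. c i * c j * K (z i) (z j)) \<ge> 0)"

definition shift_invariant_kernel :: "('a::ab_group_add \<Rightarrow> 'a \<Rightarrow> real) \<Rightarrow> bool" where
  "shift_invariant_kernel K \<longleftrightarrow> (\<exists>k. \<forall>x x'. K x x' = k (x - x'))"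

text \<open>P is the spectral probability measure of the (real, symmetric, shift-invariant) kernel K
  (Bochner): K(x,x') = integral of exp(i omega^T(x-x')) dP = integral of cos(omega^T(x-x')) dP.\<close>
definition spectral_measure :: "'a::euclidean_space measure \<Rightarrow> ('a \<Rightarrow> 'a \<Rightarrow> real) \<Rightarrow> bool" where
  "spectral_measure P K \<longleftrightarrow> prob_space P \<and> sets P = sets borel \<and>
     (\<forall>x x'. K x x' = (\<integral>\<omega>. cos (inner \<omega> (x - x')) \<partial>P))"

text \<open>The RKHS of K, abstractly: a real Hilbert space H with the canonical feature map
  kf x = K(x,.) such that <K(x,.),K(x',.)> = K(x,x') and the span of the K(x,.) is dense.
  An element f of H is identified with the function x \<mapsto> <f, K(x,.)> (reproducing property).\<close>
definition is_RKHS_feature :: "('a \<Rightarrow> 'a \<Rightarrow> real) \<Rightarrow> ('a \<Rightarrow> 'h::real_inner) \<Rightarrow> bool" where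
  "is_RKHS_feature K kf \<longleftrightarrow> (\<forall>x x'. inner (kf x) (kf x') = K x x') \<and>
     closure (span (range kf)) = UNIV"

definition eval_H :: "('a \<Rightarrow> 'h::real_inner) \<Rightarrow> 'h \<Rightarrow> 'a \<Rightarrow> real" where
  "eval_H kf f x = inner f (kf x)"

text \<open>A sample path s assigns to every iteration t \<ge> 1 the draw
  s t = (i, omega, b): the index i of the training point (x_i, y_i) and the random feature
  parameters. dsgd_state ... n = (f_(n+1), h_(n+1)).\<close>
primrec dsgd_state ::
  "(real \<Rightarrow> 'b \<Rightarrow> real) \<Rightarrow> real \<Rightarrow> real \<Rightarrow> ('a::euclidean_space \<Rightarrow> 'h::real_inner) \<Rightarrow>
   (nat \<Rightarrow> 'a) \<Rightarrow> (nat \<Rightarrow> 'b) \<Rightarrow> (nat \<Rightarrow> nat \<times> 'a \<times> real) \<Rightarrow> nat \<Rightarrow> ('a \<Rightarrow> real) \<times> 'h" where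
  "dsgd_state Ld \<gamma> lam kf xs ys s 0 = ((\<lambda>_. 0), 0)"
| "dsgd_state Ld \<gamma> lam kf xs ys s (Suc n) =
     (let (f, h) = dsgd_state Ld \<gamma> lam kf xs ys s n;
          (i, \<omega>, b) = s (Suc n);
          x = xs i; y = ys i; d = Ld (f x) y
      in ((\<lambda>z. f z - \<gamma> * (d * rf_feat \<omega> b x * rf_feat \<omega> b z + lam * f z)),
          h - \<gamma> *\<^sub>R (d *\<^sub>R kf x + lam *\<^sub>R h)))"

definition draw_measure :: "nat \<Rightarrow> 'a measure \<Rightarrow> (nat \<times> 'a \<times> real) measure" where
  "draw_measure N P = measure_pmf (pmf_of_set {..<N}) \<Otimes>\<^sub>M (P \<Otimes>\<^sub>M uniform_measure lborel {0..2*pi})"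

definition path_measure :: "nat \<Rightarrow> 'a measure \<Rightarrow> (nat \<Rightarrow> nat \<times> 'a \<times> real) measure" where
  "path_measure N P = (\<Pi>\<^sub>M t\<in>UNIV. draw_measure N P)"

end

theory Submission
  imports Defs
begin

(* The exact-kernel iterate h_t and the random-feature iterate f_t are functions of the draws of
   iterations 1, ..., t-1 only, while the draw of iteration t is independent of them and has a
   uniform data index.  Averaging over that fresh index turns ghat_t into gbar_t, whence E N_t = 0.
   For R_t, the Lipschitz bound on L' and |<h_t - f_*, K(x,.)>| <= ||h_t - f_*|| give
   R_t <= Lip |e_t(x_t)| ||h_t - f_*|| with e_t = f_t - h_t, and Cauchy-Schwarz leaves the second
   moment of e_t.  It obeys e_(t+1) = (1 - gamma lam) e_t - gamma L' (phi_w(x) phi_w(.) - K(x,.)),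
   whose noise has conditional mean zero (the random features reproduce K in expectation) and
   second moment at most 4 gamma^2 M^2, so E e_t(z)^2 never exceeds the fixed point
   4 M^2 gamma / lam <= kappa C^2.  Finally ||h_t|| <= M / lam bounds M_t.  As the spectral measure
   is a probability measure, K(x,x) = 1, so ||K(x,.)|| = 1 and kappa >= 1. *)

lemma integral_mult_le_sqrt_integral_sq:
  fixes f g :: "'a \<Rightarrow> real"
  assumes f2: "integrable M (\<lambda>x. (f x)\<^sup>2)" and g2: "integrable M (\<lambda>x. (g x)\<^sup>2)"
    and f0: "\<And>x. 0 \<le> f x" and g0: "\<And>x. 0 \<le> g x"
  shows "(\<integral>x. f x * g x \<partial>M) \<le> sqrt (\<integral>x. (f x)\<^sup>2 \<partial>M) * sqrt (\<integral>x. (g x)\<^sup>2 \<partial>M)"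
proof -
  have "(\<lambda>x. sqrt ((f x)\<^sup>2)) \<in> borel_measurable M" "(\<lambda>x. sqrt ((g x)\<^sup>2)) \<in> borel_measurable M"
    using f2 g2 by measurable
  then have [measurable]: "f \<in> borel_measurable M" "g \<in> borel_measurable M"
    using f0 g0 by simp_all
  have fg: "integrable M (\<lambda>x. f x * g x)"
  proof (rule Bochner_Integration.integrable_bound)
    show "integrable M (\<lambda>x. ((f x)\<^sup>2 + (g x)\<^sup>2) / 2)"
      using f2 g2 by simp
    show "AE x in M. norm (f x * g x) \<le> norm (((f x)\<^sup>2 + (g x)\<^sup>2) / 2)"
    proof (rule AE_I2)
      fix x
      show "norm (f x * g x) \<le> norm (((f x)\<^sup>2 + (g x)\<^sup>2) / 2)"
        using sum_squares_bound[of "f x" "g x"] f0[of x] g0[of x] by simp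
    qed
  qed measurable
  have "ennreal ((\<integral>x. f x * g x \<partial>M)\<^sup>2) = (\<integral>\<^sup>+x. f x * g x \<partial>M)\<^sup>2"
    using fg f0 g0 by (simp add: nn_integral_eq_integral ennreal_power)
  also have "\<dots> \<le> (\<integral>\<^sup>+x. (f x)\<^sup>2 \<partial>M) * (\<integral>\<^sup>+x. (g x)\<^sup>2 \<partial>M)"
    using Cauchy_Schwarz_nn_integral[of "\<lambda>x. ennreal (f x)" M "\<lambda>x. ennreal (g x)"] f0 g0
    by (simp add: ennreal_mult'[symmetric] ennreal_power)
  also have "\<dots> = ennreal ((\<integral>x. (f x)\<^sup>2 \<partial>M) * (\<integral>x. (g x)\<^sup>2 \<partial>M))"
    using f2 g2 by (simp add: nn_integral_eq_integral ennreal_mult)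
  finally have "(\<integral>x. f x * g x \<partial>M)\<^sup>2 \<le> (\<integral>x. (f x)\<^sup>2 \<partial>M) * (\<integral>x. (g x)\<^sup>2 \<partial>M)"
    by (subst (asm) ennreal_le_iff) auto
  then show ?thesis
    by (metis real_le_rsqrt real_sqrt_mult)
qed

lemma (in prob_space) integral_PiM_resample_coordinate:
  fixes F :: "('i \<Rightarrow> 'a) \<Rightarrow> real"
  assumes m: "m \<in> I" and F[measurable]: "F \<in> borel_measurable (\<Pi>\<^sub>M i\<in>I. M)"
    and bounded: "\<And>s. \<bar>F s\<bar> \<le> B"
  shows "integrable (\<Pi>\<^sub>M i\<in>I. M) (\<lambda>s. \<integral>e. F (s(m := e)) \<partial>M)"
    and "(\<integral>s. F s \<partial>\<Pi>\<^sub>M i\<in>I. M) = (\<integral>s. (\<integral>e. F (s(m := e)) \<partial>M) \<partial>\<Pi>\<^sub>M i\<in>I. M)"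
proof -
  let ?\<Pi> = "\<Pi>\<^sub>M i\<in>I. M"
  note M_prob = prob_space_axioms
  interpret \<Pi>: prob_space ?\<Pi>
    by (rule prob_space_PiM) (rule M_prob)
  interpret pair_prob_space M ?\<Pi> ..
  have upd[measurable]: "(\<lambda>(e, s). s(m := e)) \<in> M \<Otimes>\<^sub>M ?\<Pi> \<rightarrow>\<^sub>M ?\<Pi>"
    unfolding case_prod_beta' using m by (intro measurable_fun_upd[where J=I]) auto
  have int: "integrable (M \<Otimes>\<^sub>M ?\<Pi>) (\<lambda>(e, s). F (s(m := e)))"
    by (rule integrable_const_bound[where B=B]) (auto simp: bounded)
  then show "integrable ?\<Pi> (\<lambda>s. \<integral>e. F (s(m := e)) \<partial>M)"
    by (rule integrable_snd)
  have "(\<integral>s. F s \<partial>?\<Pi>) = (\<integral>s. F s \<partial>distr (M \<Otimes>\<^sub>M ?\<Pi>) ?\<Pi> (\<lambda>(e, s). s(m := e)))"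
    using distr_pair_PiM_eq_PiM[of I "\<lambda>_. M" m] m by (simp add: M_prob insert_absorb)
  also have "\<dots> = (\<integral>(e, s). F (s(m := e)) \<partial>(M \<Otimes>\<^sub>M ?\<Pi>))"
    by (simp add: integral_distr case_prod_beta')
  also have "\<dots> = (\<integral>s. (\<integral>e. F (s(m := e)) \<partial>M) \<partial>?\<Pi>)"
    using integral_snd[OF int] by simp
  finally show "(\<integral>s. F s \<partial>?\<Pi>) = (\<integral>s. (\<integral>e. F (s(m := e)) \<partial>M) \<partial>?\<Pi>)" .
qed

lemma (in prob_space) integral_sq_centered_le:
  fixes Z :: "'a \<Rightarrow> real"
  assumes [measurable]: "Z \<in> borel_measurable M" and bounded: "\<And>x. \<bar>Z x\<bar> \<le> B"
  shows "(\<integral>x. (c - g * (Z x - expectation Z))\<^sup>2 \<partial>M) \<le> c\<^sup>2 + g\<^sup>2 * B\<^sup>2"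
proof -
  have Z2_le: "(Z x)\<^sup>2 \<le> B\<^sup>2" for x
    using power_mono[OF bounded, of x 2] by simp
  have Z_int: "integrable M Z"
    by (rule integrable_const_bound[where B=B]) (use bounded in auto)
  have Z2_int: "integrable M (\<lambda>x. (Z x)\<^sup>2)"
    by (rule integrable_const_bound[where B="B\<^sup>2"]) (use Z2_le in auto)
  have "(\<integral>x. (c - g * (Z x - expectation Z))\<^sup>2 \<partial>M)
      = (\<integral>x. c\<^sup>2 - 2 * c * g * (Z x - expectation Z) + g\<^sup>2 * (Z x - expectation Z)\<^sup>2 \<partial>M)"
    by (simp add: power2_eq_square algebra_simps)
  also have "\<dots> = c\<^sup>2 + g\<^sup>2 * variance Z"
    using Z_int Z2_int by (simp add: power2_diff prob_space)
  also have "variance Z \<le> B\<^sup>2"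
  proof -
    have "expectation (\<lambda>x. (Z x)\<^sup>2) \<le> B\<^sup>2"
      using Z2_le by (intro integral_le_const Z2_int) auto
    then show ?thesis
      using variance_eq[OF Z_int Z2_int] zero_le_power2[of "expectation Z"] by linarith
  qed
  finally show ?thesis
    by (simp add: mult_left_mono)
qed

lemma integral_cos_uniform_0_2pi:
  "(\<integral>b. cos (c + 2 * b) \<partial>uniform_measure lborel {0..2*pi}) = 0"
proof -
  have "(\<integral>b. cos (c + 2 * b) \<partial>uniform_measure lborel {0..2*pi})
      = (\<integral>b. indicator {0..2*pi} b / (2*pi) * cos (c + 2 * b) \<partial>lborel)"
  proof -
    have "uniform_measure lborel {0..2*pi}
        = density lborel (\<lambda>b. ennreal (indicator {0..2*pi} b / (2*pi)))"
      unfolding uniform_measure_def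
      by (intro arg_cong2[where f=density] refl ext) (auto simp: divide_ennreal[symmetric] indicator_def)
    then show ?thesis by (simp add: integral_density)
  qed
  also have "\<dots> = (LBINT b=ereal 0..ereal (2*pi). cos (c + 2 * b)) / (2*pi)"
    by (simp add: interval_integral_Icc set_lebesgue_integral_def mult.commute)
  also have "(LBINT b=ereal 0..ereal (2*pi). cos (c + 2 * b)) = sin (c + 2 * (2*pi)) / 2 - sin (c + 2 * 0) / 2"
    by (rule interval_integral_FTC_finite)
       (auto intro!: continuous_intros derivative_eq_intros
         simp: has_real_derivative_iff_has_vector_derivative[symmetric] has_field_derivative_at_within)
  also have "sin (c + 2 * (2*pi)) = sin c"
    using sin_periodic[of c] sin_periodic[of "c + 2*pi"] by (simp add: algebra_simps)
  finally show ?thesis by simp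
qed

lemma rf_feat_mult:
  "rf_feat \<omega> b x * rf_feat \<omega> b z = cos (inner \<omega> (x - z)) + cos (inner \<omega> x + inner \<omega> z + 2 * b)"
proof -
  have "rf_feat \<omega> b x * rf_feat \<omega> b z = 2 * (cos (inner \<omega> x + b) * cos (inner \<omega> z + b))"
    by (simp add: rf_feat_def)
  also have "\<dots> = cos ((inner \<omega> x + b) - (inner \<omega> z + b)) + cos ((inner \<omega> x + b) + (inner \<omega> z + b))"
    unfolding cos_times_cos by simp
  also have "(inner \<omega> x + b) - (inner \<omega> z + b) = inner \<omega> (x - z)"
    by (simp add: inner_diff_right)
  also have "(inner \<omega> x + b) + (inner \<omega> z + b) = inner \<omega> x + inner \<omega> z + 2 * b"
    by simp
  finally show ?thesis .
qed

lemma abs_rf_feat_mult_le: "\<bar>rf_feat \<omega> b x * rf_feat \<omega> b z\<bar> \<le> 2"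
proof -
  have "\<bar>rf_feat \<omega> b x * rf_feat \<omega> b z\<bar>
      \<le> \<bar>cos (inner \<omega> (x - z))\<bar> + \<bar>cos (inner \<omega> x + inner \<omega> z + 2 * b)\<bar>"
    unfolding rf_feat_mult by (rule abs_triangle_ineq)
  then show ?thesis
    using abs_cos_le_one[of "inner \<omega> (x - z)"] abs_cos_le_one[of "inner \<omega> x + inner \<omega> z + 2 * b"]
    by linarith
qed

lemma integral_rf_feat_mult:
  assumes P: "prob_space P" "sets P = sets borel"
  shows "(\<integral>(\<omega>, b). rf_feat \<omega> b x * rf_feat \<omega> b z \<partial>(P \<Otimes>\<^sub>M uniform_measure lborel {0..2*pi}))
       = (\<integral>\<omega>. cos (inner \<omega> (x - z)) \<partial>P)"
proof -
  let ?U = "uniform_measure lborel {0..2*pi}"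
  interpret U: prob_space ?U
    by (rule prob_space_uniform_measure) auto
  interpret P\<omega>: prob_space P by (rule P(1))
  interpret PU: pair_prob_space P ?U ..
  have [measurable]: "(\<lambda>(\<omega>, b). rf_feat \<omega> b x * rf_feat \<omega> b z) \<in> borel_measurable (P \<Otimes>\<^sub>M ?U)"
    unfolding measurable_cong_sets[OF sets_pair_measure_cong[OF P(2) refl] refl]
    by (simp add: rf_feat_def)
  have "integrable (P \<Otimes>\<^sub>M ?U) (\<lambda>(\<omega>, b). rf_feat \<omega> b x * rf_feat \<omega> b z)"
    by (rule PU.integrable_const_bound[where B=2]) (auto simp: abs_rf_feat_mult_le)
  then have "(\<integral>(\<omega>, b). rf_feat \<omega> b x * rf_feat \<omega> b z \<partial>(P \<Otimes>\<^sub>M ?U))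
      = (\<integral>\<omega>. (\<integral>b. rf_feat \<omega> b x * rf_feat \<omega> b z \<partial>?U) \<partial>P)"
    by (subst PU.integral_fst'[symmetric]) simp_all
  also have "\<dots> = (\<integral>\<omega>. cos (inner \<omega> (x - z)) \<partial>P)"
  proof (rule Bochner_Integration.integral_cong[OF refl])
    fix \<omega>
    have "integrable ?U (\<lambda>b. cos (inner \<omega> x + inner \<omega> z + 2 * b))"
      by (rule U.integrable_const_bound[where B=1]) auto
    then show "(\<integral>b. rf_feat \<omega> b x * rf_feat \<omega> b z \<partial>?U) = cos (inner \<omega> (x - z))"
      by (simp add: rf_feat_mult U.prob_space integral_cos_uniform_0_2pi)
  qed
  finally show ?thesis .
qed

lemma dsgd_state_fun_upd:
  "n < m \<Longrightarrow> dsgd_state Ld \<gamma> lam kf xs ys (s(m := e)) n = dsgd_state Ld \<gamma> lam kf xs ys s n"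
  by (induction n) simp_all

locale dsgd_model =
  fixes Ld :: "real \<Rightarrow> 'b \<Rightarrow> real" and \<gamma> lam :: real
    and kf :: "'a::euclidean_space \<Rightarrow> 'h::real_inner"
    and xs :: "nat \<Rightarrow> 'a" and ys :: "nat \<Rightarrow> 'b"
    and K :: "'a \<Rightarrow> 'a \<Rightarrow> real" and P :: "'a measure"
    and N :: nat and M \<kappa> Lip :: real
  assumes N_pos: "0 < N"
    and spectral: "spectral_measure P K"
    and RKHS: "is_RKHS_feature K kf"
    and lam_pos: "0 < lam" and gamma_pos: "0 < \<gamma>" and gamma_lam_le: "\<gamma> * lam \<le> 1"
    and Ld_le: "\<And>u y. \<bar>Ld u y\<bar> \<le> M"
    and Ld_lipschitz: "\<And>u v y. \<bar>Ld u y - Ld v y\<bar> \<le> Lip * \<bar>u - v\<bar>"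
    and K_le: "\<And>x z. K x z \<le> \<kappa>"
begin

abbreviation "feature_law \<equiv> P \<Otimes>\<^sub>M uniform_measure lborel {0..2*pi}"
abbreviation "draw_law \<equiv> draw_measure N P"
abbreviation "path_law \<equiv> path_measure N P"
(* f_state n s and h_state n s are f_(n+1) and h_(n+1) of the paper, built from the draws
   s 1, ..., s n. *)
abbreviation "f_state n s \<equiv> fst (dsgd_state Ld \<gamma> lam kf xs ys s n)"
abbreviation "h_state n s \<equiv> snd (dsgd_state Ld \<gamma> lam kf xs ys s n)"
abbreviation "index s n \<equiv> fst (s n)"

lemma prob_space_P: "prob_space P" and sets_P: "sets P = sets borel"
  and K_eq_integral: "K x z = (\<integral>\<omega>. cos (inner \<omega> (x - z)) \<partial>P)"
  using spectral by (auto simp: spectral_measure_def)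

lemma inner_kf: "inner (kf x) (kf z) = K x z"
  using RKHS by (simp add: is_RKHS_feature_def)

lemma prob_space_feature_law: "prob_space feature_law"
  by (intro prob_space_pair prob_space_P prob_space_uniform_measure) auto

lemma prob_space_draw_law: "prob_space draw_law"
  unfolding draw_measure_def
  by (intro prob_space_pair prob_space_feature_law measure_pmf.prob_space_axioms)

lemma path_law_eq: "path_law = (\<Pi>\<^sub>M t\<in>UNIV. draw_law)"
  by (simp add: path_measure_def)

lemma prob_space_path_law: "prob_space path_law"
  unfolding path_law_eq by (intro prob_space_PiM prob_space_draw_law)

lemma integrable_path_law_bounded:
  fixes F :: "(nat \<Rightarrow> nat \<times> 'a \<times> real) \<Rightarrow> real"
  assumes "F \<in> borel_measurable path_law" "\<And>s. \<bar>F s\<bar> \<le> B"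
  shows "integrable path_law F"
proof -
  interpret path: prob_space path_law by (rule prob_space_path_law)
  show ?thesis
    using assms by (intro path.integrable_const_bound[where B=B]) auto
qed

lemma sets_draw_law:
  "sets draw_law = sets (count_space UNIV \<Otimes>\<^sub>M (borel \<Otimes>\<^sub>M borel))"
  unfolding draw_measure_def
  by (intro sets_pair_measure_cong sets_P) auto

lemma space_path_law: "space path_law = UNIV"
  using sets_eq_imp_space_eq[OF sets_P]
  by (simp add: path_law_eq space_PiM draw_measure_def space_pair_measure)

lemma measurable_path_coordinate[measurable]: "(\<lambda>s. s n) \<in> path_law \<rightarrow>\<^sub>M draw_law"
  unfolding path_law_eq by simp

lemma measurable_draw_index[measurable]: "fst \<in> draw_law \<rightarrow>\<^sub>M count_space UNIV"
  and measurable_draw_feature[measurable]: "(\<lambda>e. fst (snd e)) \<in> borel_measurable draw_law"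
    "(\<lambda>e. snd (snd e)) \<in> borel_measurable draw_law"
  unfolding measurable_cong_sets[OF sets_draw_law refl] by simp_all

lemma measurable_path_fun_upd[measurable]: "(\<lambda>e. s(m := e)) \<in> draw_law \<rightarrow>\<^sub>M path_law"
  using space_path_law unfolding path_law_eq
  by (intro measurable_fun_upd[where J=UNIV] measurable_const) auto

lemma measurable_feature_law_rf_feat_mult[measurable]:
  "(\<lambda>(\<omega>, b). rf_feat \<omega> b x * rf_feat \<omega> b z) \<in> borel_measurable feature_law"
  unfolding measurable_cong_sets[OF sets_pair_measure_cong[OF sets_P refl] refl]
  by (simp add: rf_feat_def)

lemma integral_feature_law_rf_feat_mult:
  "(\<integral>(\<omega>, b). rf_feat \<omega> b x * rf_feat \<omega> b z \<partial>feature_law) = K x z"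
  by (simp add: integral_rf_feat_mult[OF prob_space_P sets_P] K_eq_integral)

lemma integral_draw_law:
  assumes [measurable]: "G \<in> borel_measurable draw_law" and bounded: "\<And>e. \<bar>G e\<bar> \<le> B"
  shows "(\<integral>e. G e \<partial>draw_law) = (\<Sum>i<N. \<integral>q. G (i, q) \<partial>feature_law) / N"
proof -
  interpret I: prob_space "measure_pmf (pmf_of_set {..<N})"
    by (rule measure_pmf.prob_space_axioms)
  interpret Q: prob_space feature_law by (rule prob_space_feature_law)
  interpret IQ: pair_prob_space "measure_pmf (pmf_of_set {..<N})" feature_law ..
  have "integrable draw_law G"
    unfolding draw_measure_def
    by (rule IQ.integrable_const_bound[where B=B]) (auto simp: bounded draw_measure_def[symmetric])
  then have "(\<integral>e. G e \<partial>draw_law)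
      = (\<integral>i. (\<integral>q. G (i, q) \<partial>feature_law) \<partial>measure_pmf (pmf_of_set {..<N}))"
    unfolding draw_measure_def by (subst IQ.integral_fst'[symmetric]) simp_all
  also have "\<dots> = (\<Sum>i<N. \<integral>q. G (i, q) \<partial>feature_law) / N"
    using N_pos by (subst integral_pmf_of_set) auto
  finally show ?thesis .
qed

lemma integral_path_law_resample:
  fixes F :: "(nat \<Rightarrow> nat \<times> 'a \<times> real) \<Rightarrow> real"
  assumes "F \<in> borel_measurable path_law" "\<And>s. \<bar>F s\<bar> \<le> B"
  shows "integrable path_law (\<lambda>s. \<integral>e. F (s(m := e)) \<partial>draw_law)"
    and "(\<integral>s. F s \<partial>path_law) = (\<integral>s. (\<integral>e. F (s(m := e)) \<partial>draw_law) \<partial>path_law)"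
  using prob_space.integral_PiM_resample_coordinate[OF prob_space_draw_law UNIV_I, of F B] assms
  unfolding path_law_eq by auto

lemma integral_fresh_index:
  assumes a[measurable]: "\<And>i. (\<lambda>s. a s i) \<in> borel_measurable path_law"
    and bounded: "\<And>s i. \<bar>a s i\<bar> \<le> B" and past: "\<And>s e i. a (s(m := e)) i = a s i"
  shows "(\<integral>s. a s (index s m) \<partial>path_law) = (\<integral>s. (\<Sum>i<N. a s i) / N \<partial>path_law)"
proof -
  interpret Q: prob_space feature_law by (rule prob_space_feature_law)
  have "(\<lambda>s. a s (index s m)) \<in> borel_measurable path_law"
    by (rule measurable_compose_countable[OF a]) measurable
  then have "(\<integral>s. a s (index s m) \<partial>path_law) = (\<integral>s. (\<integral>e. a s (fst e) \<partial>draw_law) \<partial>path_law)"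
    using integral_path_law_resample(2)[of "\<lambda>s. a s (index s m)" B m] bounded past by simp
  also have "\<dots> = (\<integral>s. (\<Sum>i<N. a s i) / N \<partial>path_law)"
  proof (rule Bochner_Integration.integral_cong[OF refl])
    fix s
    have "(\<lambda>e. a s (fst e)) \<in> borel_measurable draw_law"
      by (rule measurable_compose_countable[OF _ measurable_draw_index]) simp
    then show "(\<integral>e. a s (fst e) \<partial>draw_law) = (\<Sum>i<N. a s i) / N"
      using bounded by (simp add: integral_draw_law[where B=B] Q.prob_space)
  qed
  finally show ?thesis .
qed

lemma M_nonneg: "0 \<le> M"
  using Ld_le[of 0 undefined] by linarith

lemma Lip_nonneg: "0 \<le> Lip"
  using order_trans[OF abs_ge_zero Ld_lipschitz[of 1 undefined 0]] by simp

lemma Ld_measurable[measurable]: "(\<lambda>u. Ld u y) \<in> borel_measurable borel"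
proof (rule borel_measurable_continuous_onI, rule lipschitz_on_continuous_on)
  show "Lip-lipschitz_on UNIV (\<lambda>u. Ld u y)"
    by (rule lipschitz_onI) (auto simp: dist_real_def Ld_lipschitz Lip_nonneg)
qed

lemma K_diag: "K x x = 1"
  using prob_space.prob_space[OF prob_space_P] by (simp add: K_eq_integral)

lemma one_le_kappa: "1 \<le> \<kappa>"
  using K_le[of undefined undefined] by (simp add: K_diag)

lemma norm_kf: "norm (kf x) = 1"
  using inner_kf[of x x] by (simp add: K_diag norm_eq_sqrt_inner)

lemma abs_eval_H_le: "\<bar>eval_H kf h x\<bar> \<le> norm h"
  using Cauchy_Schwarz_ineq2[of h "kf x"] by (simp add: eval_H_def norm_kf)

lemma dsgd_state_Suc:
  assumes "s (Suc n) = (i, \<omega>, b)"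
  shows f_state_Suc: "f_state (Suc n) s z = (1 - \<gamma> * lam) * f_state n s z
            - \<gamma> * Ld (f_state n s (xs i)) (ys i) * (rf_feat \<omega> b (xs i) * rf_feat \<omega> b z)"
    and h_state_Suc: "h_state (Suc n) s = (1 - \<gamma> * lam) *\<^sub>R h_state n s
            - (\<gamma> * Ld (f_state n s (xs i)) (ys i)) *\<^sub>R kf (xs i)"
  using assms by (simp_all add: case_prod_beta Let_def algebra_simps)

declare dsgd_state.simps(2)[simp del]

lemma norm_h_state_le: "norm (h_state n s) \<le> M / lam"
proof (induction n)
  case 0
  show ?case using M_nonneg lam_pos by simp
next
  case (Suc n)
  obtain i \<omega> b where s: "s (Suc n) = (i, \<omega>, b)"
    using prod_cases3 by blast
  have "norm (h_state (Suc n) s)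
      \<le> norm ((1 - \<gamma> * lam) *\<^sub>R h_state n s) + norm ((\<gamma> * Ld (f_state n s (xs i)) (ys i)) *\<^sub>R kf (xs i))"
    unfolding h_state_Suc[where s=s and n=n, OF s] by (rule norm_triangle_ineq4)
  also have "\<dots> = (1 - \<gamma> * lam) * norm (h_state n s) + \<gamma> * \<bar>Ld (f_state n s (xs i)) (ys i)\<bar>"
    using gamma_lam_le gamma_pos by (simp add: norm_kf abs_mult)
  also have "\<dots> \<le> (1 - \<gamma> * lam) * (M / lam) + \<gamma> * M"
    using Suc.IH gamma_lam_le gamma_pos Ld_le by (intro add_mono mult_left_mono) auto
  also have "\<dots> = M / lam"
    using lam_pos by (simp add: field_simps)
  finally show ?case .
qed

lemma abs_f_state_le: "\<bar>f_state n s z\<bar> \<le> 2 * \<gamma> * M * n"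
proof (induction n)
  case (Suc n)
  obtain i \<omega> b where s: "s (Suc n) = (i, \<omega>, b)"
    using prod_cases3 by blast
  let ?step = "\<gamma> * Ld (f_state n s (xs i)) (ys i) * (rf_feat \<omega> b (xs i) * rf_feat \<omega> b z)"
  have "\<bar>f_state (Suc n) s z\<bar> \<le> \<bar>(1 - \<gamma> * lam) * f_state n s z\<bar> + \<bar>?step\<bar>"
    unfolding f_state_Suc[where s=s and n=n, OF s] by (rule abs_triangle_ineq4)
  also have "\<bar>(1 - \<gamma> * lam) * f_state n s z\<bar> \<le> \<bar>f_state n s z\<bar>"
    using gamma_lam_le gamma_pos lam_pos by (simp add: abs_mult mult_left_le_one_le)
  also have "\<bar>?step\<bar> \<le> \<gamma> * (M * 2)"
    using mult_mono[OF Ld_le abs_rf_feat_mult_le] M_nonneg gamma_pos by (simp add: abs_mult)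
  also have "\<bar>f_state n s z\<bar> + \<gamma> * (M * 2) \<le> 2 * \<gamma> * M * Suc n"
    using Suc.IH by (simp add: algebra_simps)
  finally show ?case
    by simp
qed simp

definition approx_gap :: "nat \<Rightarrow> (nat \<Rightarrow> nat \<times> 'a \<times> real) \<Rightarrow> 'a \<Rightarrow> real" where
  "approx_gap n s z = f_state n s z - eval_H kf (h_state n s) z"

lemma approx_gap_Suc:
  assumes "s (Suc n) = (i, \<omega>, b)"
  shows "approx_gap (Suc n) s z = (1 - \<gamma> * lam) * approx_gap n s z
           - \<gamma> * Ld (f_state n s (xs i)) (ys i) * (rf_feat \<omega> b (xs i) * rf_feat \<omega> b z - K (xs i) z)"
  using assms
  by (simp add: approx_gap_def eval_H_def dsgd_state_Suc inner_diff_left inner_kf algebra_simps)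

lemma approx_gap_fun_upd: "n < m \<Longrightarrow> approx_gap n (s(m := e)) z = approx_gap n s z"
  by (simp add: approx_gap_def dsgd_state_fun_upd)

lemma abs_approx_gap_le: "\<bar>approx_gap n s z\<bar> \<le> 2 * \<gamma> * M * n + M / lam"
  using abs_f_state_le[where n=n and s=s and z=z] abs_eval_H_le[of "h_state n s" z]
    norm_h_state_le[where n=n and s=s]
  unfolding approx_gap_def by linarith

lemma measurable_dsgd_state:
  "(\<lambda>s. f_state n s z) \<in> borel_measurable path_law
   \<and> (\<lambda>s. inner (h_state n s) v) \<in> borel_measurable path_law
   \<and> (\<lambda>s. (norm (h_state n s))\<^sup>2) \<in> borel_measurable path_law"
proof (induction n arbitrary: z v)
  case (Suc n)
  have [measurable]: "(\<lambda>s. f_state n s z) \<in> borel_measurable path_law"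
    "(\<lambda>s. inner (h_state n s) v) \<in> borel_measurable path_law"
    "(\<lambda>s. (norm (h_state n s))\<^sup>2) \<in> borel_measurable path_law" for z v
    using Suc.IH by blast+
  let ?\<omega> = "\<lambda>s. fst (snd (s (Suc n)))" and ?b = "\<lambda>s. snd (snd (s (Suc n)))"
  let ?d = "\<lambda>i s. \<gamma> * Ld (f_state n s (xs i)) (ys i)"
  have f_Suc: "f_state (Suc n) s z = (\<lambda>i s. (1 - \<gamma> * lam) * f_state n s z
      - ?d i s * (rf_feat (?\<omega> s) (?b s) (xs i) * rf_feat (?\<omega> s) (?b s) z)) (index s (Suc n)) s" for s z
    by (simp add: f_state_Suc[where \<omega>="?\<omega> s" and b="?b s"])
  have h_Suc: "h_state (Suc n) s = (1 - \<gamma> * lam) *\<^sub>R h_state n s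
      - ?d (index s (Suc n)) s *\<^sub>R kf (xs (index s (Suc n)))" for s
    by (simp add: h_state_Suc[where \<omega>="?\<omega> s" and b="?b s"])
  have h_Suc_sq: "(norm (h_state (Suc n) s))\<^sup>2 = (\<lambda>i s. (1 - \<gamma> * lam)\<^sup>2 * (norm (h_state n s))\<^sup>2
      - 2 * (1 - \<gamma> * lam) * ?d i s * inner (h_state n s) (kf (xs i)) + (?d i s)\<^sup>2) (index s (Suc n)) s" for s
    unfolding h_Suc power2_norm_eq_inner
    by (simp add: inner_diff_left inner_diff_right inner_commute inner_kf K_diag power2_eq_square algebra_simps)
  have "(\<lambda>s. f_state (Suc n) s z) \<in> borel_measurable path_law"
    unfolding f_Suc rf_feat_def by (rule measurable_compose_countable[where g="\<lambda>s. index s (Suc n)"]) measurable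
  moreover have "(\<lambda>s. inner (h_state (Suc n) s) v) \<in> borel_measurable path_law"
    unfolding h_Suc inner_diff_left inner_scaleR_left
    by (rule measurable_compose_countable[where g="\<lambda>s. index s (Suc n)"]) measurable
  moreover have "(\<lambda>s. (norm (h_state (Suc n) s))\<^sup>2) \<in> borel_measurable path_law"
    unfolding h_Suc_sq
    by (rule measurable_compose_countable[where g="\<lambda>s. index s (Suc n)"]) measurable
  ultimately show ?case by blast
qed simp

lemma measurable_f_state[measurable]: "(\<lambda>s. f_state n s z) \<in> borel_measurable path_law"
  and measurable_inner_h_state[measurable]: "(\<lambda>s. inner (h_state n s) v) \<in> borel_measurable path_law"
  and measurable_norm_h_state_sq[measurable]: "(\<lambda>s. (norm (h_state n s))\<^sup>2) \<in> borel_measurable path_law"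
  using measurable_dsgd_state by blast+

lemma measurable_norm_h_state_diff_sq[measurable]:
  "(\<lambda>s. (norm (h_state n s - f0))\<^sup>2) \<in> borel_measurable path_law"
proof -
  have "(\<lambda>s. (norm (h_state n s - f0))\<^sup>2)
      = (\<lambda>s. (norm (h_state n s))\<^sup>2 - 2 * inner (h_state n s) f0 + (norm f0)\<^sup>2)"
    by (simp add: fun_eq_iff power2_norm_eq_inner inner_diff_left inner_diff_right inner_commute)
  then show ?thesis
    by simp
qed

lemma measurable_approx_gap[measurable]: "(\<lambda>s. approx_gap n s z) \<in> borel_measurable path_law"
  unfolding approx_gap_def eval_H_def by measurable

lemma approx_gap_sq_le: "(approx_gap n s z)\<^sup>2 \<le> (2 * \<gamma> * M * n + M / lam)\<^sup>2"
  using power_mono[OF abs_approx_gap_le[where n=n and s=s and z=z] abs_ge_zero, of 2] by simp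

lemma integrable_approx_gap_sq: "integrable path_law (\<lambda>s. (approx_gap n s z)\<^sup>2)"
  using approx_gap_sq_le by (intro integrable_path_law_bounded) auto

lemma integral_approx_gap_Suc_sq_resampled_le:
  "(\<integral>e. (approx_gap (Suc n) (s(Suc n := e)) z)\<^sup>2 \<partial>draw_law)
     \<le> (1 - \<gamma> * lam)\<^sup>2 * (approx_gap n s z)\<^sup>2 + 4 * \<gamma>\<^sup>2 * M\<^sup>2"
proof -
  interpret Q: prob_space feature_law by (rule prob_space_feature_law)
  let ?c = "(1 - \<gamma> * lam) * approx_gap n s z"
  let ?g = "\<lambda>i. \<gamma> * Ld (f_state n s (xs i)) (ys i)"
  let ?Z = "\<lambda>i (\<omega>, b). rf_feat \<omega> b (xs i) * rf_feat \<omega> b z"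
  have "(\<integral>e. (approx_gap (Suc n) (s(Suc n := e)) z)\<^sup>2 \<partial>draw_law)
      = (\<Sum>i<N. \<integral>q. (approx_gap (Suc n) (s(Suc n := (i, q))) z)\<^sup>2 \<partial>feature_law) / N"
    using approx_gap_sq_le by (intro integral_draw_law) auto
  also have "\<dots> \<le> (\<Sum>i<N. (1 - \<gamma> * lam)\<^sup>2 * (approx_gap n s z)\<^sup>2 + 4 * \<gamma>\<^sup>2 * M\<^sup>2) / N"
  proof (intro divide_right_mono sum_mono)
    fix i
    \<comment> \<open>Given the past and the index, the feature noise is centred: its mean is \<open>K (xs i) z\<close>.\<close>
    have "(\<integral>q. (approx_gap (Suc n) (s(Suc n := (i, q))) z)\<^sup>2 \<partial>feature_law)
        = (\<integral>q. (?c - ?g i * (?Z i q - Q.expectation (?Z i)))\<^sup>2 \<partial>feature_law)"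
      by (intro Bochner_Integration.integral_cong refl)
         (auto simp: approx_gap_Suc approx_gap_fun_upd dsgd_state_fun_upd
           integral_feature_law_rf_feat_mult mult.assoc)
    also have "\<dots> \<le> ?c\<^sup>2 + (?g i)\<^sup>2 * 2\<^sup>2"
      by (intro Q.integral_sq_centered_le) (auto simp: abs_rf_feat_mult_le)
    also have "(?g i)\<^sup>2 \<le> \<gamma>\<^sup>2 * M\<^sup>2"
      using power_mono[OF Ld_le[of "f_state n s (xs i)" "ys i"] abs_ge_zero, of 2]
      by (simp add: power_mult_distrib mult_left_mono)
    finally show "(\<integral>q. (approx_gap (Suc n) (s(Suc n := (i, q))) z)\<^sup>2 \<partial>feature_law)
        \<le> (1 - \<gamma> * lam)\<^sup>2 * (approx_gap n s z)\<^sup>2 + 4 * \<gamma>\<^sup>2 * M\<^sup>2"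
      by (simp add: power_mult_distrib)
  qed simp
  also have "\<dots> = (1 - \<gamma> * lam)\<^sup>2 * (approx_gap n s z)\<^sup>2 + 4 * \<gamma>\<^sup>2 * M\<^sup>2"
    using N_pos by simp
  finally show ?thesis .
qed

lemma integral_approx_gap_sq_le: "(\<integral>s. (approx_gap n s z)\<^sup>2 \<partial>path_law) \<le> 4 * M\<^sup>2 * \<gamma> / lam"
proof (induction n)
  case 0
  show ?case using gamma_pos lam_pos by (simp add: approx_gap_def eval_H_def)
next
  case (Suc n)
  interpret path: prob_space path_law by (rule prob_space_path_law)
  note gap_int = integrable_approx_gap_sq[of n z]
  have "(\<integral>s. (approx_gap (Suc n) s z)\<^sup>2 \<partial>path_law)
      = (\<integral>s. (\<integral>e. (approx_gap (Suc n) (s(Suc n := e)) z)\<^sup>2 \<partial>draw_law) \<partial>path_law)"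
    using approx_gap_sq_le by (intro integral_path_law_resample(2)) auto
  also have "\<dots> \<le> (\<integral>s. (1 - \<gamma> * lam)\<^sup>2 * (approx_gap n s z)\<^sup>2 + 4 * \<gamma>\<^sup>2 * M\<^sup>2 \<partial>path_law)"
    using approx_gap_sq_le gap_int
    by (intro integral_mono integral_path_law_resample(1) integral_approx_gap_Suc_sq_resampled_le) auto
  also have "\<dots> = (1 - \<gamma> * lam)\<^sup>2 * (\<integral>s. (approx_gap n s z)\<^sup>2 \<partial>path_law) + 4 * \<gamma>\<^sup>2 * M\<^sup>2"
    using gap_int by (simp add: path.prob_space)
  also have "\<dots> \<le> (1 - \<gamma> * lam)\<^sup>2 * (4 * M\<^sup>2 * \<gamma> / lam) + 4 * \<gamma>\<^sup>2 * M\<^sup>2"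
    using Suc.IH by (intro add_right_mono mult_left_mono) auto
  also have "\<dots> \<le> 4 * M\<^sup>2 * \<gamma> / lam"
  proof -
    have "4 * M\<^sup>2 * \<gamma> / lam - (1 - \<gamma> * lam)\<^sup>2 * (4 * M\<^sup>2 * \<gamma> / lam)
        = 4 * \<gamma>\<^sup>2 * M\<^sup>2 * (2 - \<gamma> * lam)"
      using lam_pos by (simp add: field_simps power2_eq_square)
    moreover have "4 * \<gamma>\<^sup>2 * M\<^sup>2 * 1 \<le> 4 * \<gamma>\<^sup>2 * M\<^sup>2 * (2 - \<gamma> * lam)"
      using gamma_lam_le by (intro mult_left_mono) auto
    ultimately show ?thesis by linarith
  qed
  finally show ?case .
qed

lemma integral_approx_gap_fresh_sq_le:
  assumes "n < m"
  shows "(\<integral>s. (approx_gap n s (xs (index s m)))\<^sup>2 \<partial>path_law) \<le> 4 * M\<^sup>2 * \<gamma> / lam"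
proof -
  have "(\<integral>s. (approx_gap n s (xs (index s m)))\<^sup>2 \<partial>path_law)
      = (\<integral>s. (\<Sum>i<N. (approx_gap n s (xs i))\<^sup>2) / N \<partial>path_law)"
    using approx_gap_sq_le approx_gap_fun_upd[OF assms] by (intro integral_fresh_index) auto
  also have "\<dots> = (\<Sum>i<N. \<integral>s. (approx_gap n s (xs i))\<^sup>2 \<partial>path_law) / N"
    by (simp add: integrable_approx_gap_sq)
  also have "\<dots> \<le> (\<Sum>i<N. 4 * M\<^sup>2 * \<gamma> / lam) / N"
    by (intro divide_right_mono sum_mono integral_approx_gap_sq_le) simp
  also have "\<dots> = 4 * M\<^sup>2 * \<gamma> / lam"
    using N_pos by simp
  finally show ?thesis .
qed

lemma norm_gradient_sq_le: "(norm (Ld u y *\<^sub>R kf x + lam *\<^sub>R h_state n s))\<^sup>2 \<le> 4 * \<kappa> * M\<^sup>2"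
proof -
  have "norm (Ld u y *\<^sub>R kf x + lam *\<^sub>R h_state n s) \<le> \<bar>Ld u y\<bar> + lam * norm (h_state n s)"
    using norm_triangle_ineq[of "Ld u y *\<^sub>R kf x" "lam *\<^sub>R h_state n s"] lam_pos by (simp add: norm_kf)
  also have "\<dots> \<le> M + lam * (M / lam)"
    using Ld_le norm_h_state_le lam_pos by (intro add_mono mult_left_mono) auto
  also have "\<dots> = 2 * M"
    using lam_pos by simp
  finally have "(norm (Ld u y *\<^sub>R kf x + lam *\<^sub>R h_state n s))\<^sup>2 \<le> (2 * M)\<^sup>2"
    by (rule power_mono) simp
  also have "\<dots> \<le> 4 * \<kappa> * M\<^sup>2"
    using mult_right_mono[OF one_le_kappa zero_le_power2[of M]] by (simp add: power_mult_distrib)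
  finally show ?thesis .
qed

lemma norm_h_state_diff_le: "norm (h_state n s - f0) \<le> M / lam + norm f0"
  using norm_triangle_ineq4[of "h_state n s" f0] norm_h_state_le[where n=n and s=s] by linarith

lemma abs_eval_H_diff_le: "\<bar>eval_H kf (h_state n s - f0) x\<bar> \<le> M / lam + norm f0"
  using abs_eval_H_le norm_h_state_diff_le by (rule order_trans)

lemma integral_sampling_noise_eq_0:
  assumes "n < m"
  shows "(\<integral>s. inner (h_state n s - f0)
      ((1 / real N) *\<^sub>R (\<Sum>i<N. Ld (eval_H kf (h_state n s) (xs i)) (ys i) *\<^sub>R kf (xs i))
         + lam *\<^sub>R h_state n s
       - (Ld (eval_H kf (h_state n s) (xs (index s m))) (ys (index s m)) *\<^sub>R kf (xs (index s m))
         + lam *\<^sub>R h_state n s)) \<partial>path_law) = 0"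
proof -
  define a where "a s i = Ld (eval_H kf (h_state n s) (xs i)) (ys i) * eval_H kf (h_state n s - f0) (xs i)"
    for s i
  have a_le: "\<bar>a s i\<bar> \<le> M * (M / lam + norm f0)" for s i
    unfolding a_def abs_mult using M_nonneg by (intro mult_mono Ld_le abs_eval_H_diff_le) auto
  have a_measurable[measurable]: "(\<lambda>s. a s i) \<in> borel_measurable path_law" for i
    unfolding a_def eval_H_def inner_diff_left by measurable
  have "(\<lambda>s. a s (index s m)) \<in> borel_measurable path_law"
    by (rule measurable_compose_countable[where g="\<lambda>s. index s m"]) measurable
  then have "integrable path_law (\<lambda>s. a s (index s m))"
    using a_le by (intro integrable_path_law_bounded)
  moreover have "integrable path_law (\<lambda>s. a s i)" for i
    using a_le by (intro integrable_path_law_bounded) auto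
  moreover have "inner (h_state n s - f0)
      ((1 / real N) *\<^sub>R (\<Sum>i<N. Ld (eval_H kf (h_state n s) (xs i)) (ys i) *\<^sub>R kf (xs i))
         + lam *\<^sub>R h_state n s
       - (Ld (eval_H kf (h_state n s) (xs (index s m))) (ys (index s m)) *\<^sub>R kf (xs (index s m))
         + lam *\<^sub>R h_state n s))
    = (\<Sum>i<N. a s i) / N - a s (index s m)" for s
    unfolding a_def eval_H_def
    by (simp add: inner_diff_right inner_add_right inner_sum_right divide_inverse)
  moreover have "(\<integral>s. a s (index s m) \<partial>path_law) = (\<integral>s. (\<Sum>i<N. a s i) / N \<partial>path_law)"
    by (rule integral_fresh_index[OF a_measurable a_le]) (simp add: a_def dsgd_state_fun_upd assms)
  ultimately show ?thesis
    by simp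
qed

lemma inner_feature_error_le:
  "inner (h_state n s - f0)
      ((Ld (eval_H kf (h_state n s) x) y *\<^sub>R kf x + lam *\<^sub>R h_state n s)
       - (Ld (f_state n s x) y *\<^sub>R kf x + lam *\<^sub>R h_state n s))
    \<le> Lip * (\<bar>approx_gap n s x\<bar> * norm (h_state n s - f0))"
proof -
  have "inner (h_state n s - f0)
      ((Ld (eval_H kf (h_state n s) x) y *\<^sub>R kf x + lam *\<^sub>R h_state n s)
       - (Ld (f_state n s x) y *\<^sub>R kf x + lam *\<^sub>R h_state n s))
    = (Ld (eval_H kf (h_state n s) x) y - Ld (f_state n s x) y) * eval_H kf (h_state n s - f0) x"
    by (simp add: eval_H_def inner_diff_right inner_add_right inner_commute algebra_simps)
  also have "\<dots> \<le> \<bar>Ld (eval_H kf (h_state n s) x) y - Ld (f_state n s x) y\<bar> * \<bar>eval_H kf (h_state n s - f0) x\<bar>"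
    by (simp add: abs_mult[symmetric])
  also have "\<dots> \<le> (Lip * \<bar>approx_gap n s x\<bar>) * norm (h_state n s - f0)"
    unfolding approx_gap_def
    by (intro mult_mono) (auto simp: Ld_lipschitz abs_minus_commute abs_eval_H_le Lip_nonneg)
  finally show ?thesis
    by (simp add: mult.assoc)
qed

lemma integral_feature_error_le:
  assumes "n < m"
  shows "(\<integral>s. inner (h_state n s - f0)
      ((Ld (eval_H kf (h_state n s) (xs (index s m))) (ys (index s m)) *\<^sub>R kf (xs (index s m))
         + lam *\<^sub>R h_state n s)
       - (Ld (f_state n s (xs (index s m))) (ys (index s m)) *\<^sub>R kf (xs (index s m))
         + lam *\<^sub>R h_state n s)) \<partial>path_law)
    \<le> Lip * sqrt (4 * M\<^sup>2 * \<gamma> / lam) * sqrt (\<integral>s. (norm (h_state n s - f0))\<^sup>2 \<partial>path_law)"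
proof -
  define D where "D s = \<bar>approx_gap n s (xs (index s m))\<bar>" for s
  define S where "S s = norm (h_state n s - f0)" for s
  define B\<^sub>D where "B\<^sub>D = 2 * \<gamma> * M * n + M / lam"
  define B\<^sub>S where "B\<^sub>S = M / lam + norm f0"
  have D_measurable[measurable]: "D \<in> borel_measurable path_law"
    unfolding D_def
    by (rule measurable_compose_countable[where f="\<lambda>i s. \<bar>approx_gap n s (xs i)\<bar>"]) measurable
  have "(\<lambda>s. sqrt ((norm (h_state n s - f0))\<^sup>2)) \<in> borel_measurable path_law"
    by measurable
  then have S_measurable[measurable]: "S \<in> borel_measurable path_law"
    by (simp add: S_def[abs_def])
  have D_le: "D s \<le> B\<^sub>D" and S_le: "S s \<le> B\<^sub>S" and D_nonneg: "0 \<le> D s" and S_nonneg: "0 \<le> S s" for s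
    unfolding D_def S_def B\<^sub>D_def B\<^sub>S_def
    by (simp_all add: abs_approx_gap_le norm_h_state_diff_le)
  have "\<bar>(D s)\<^sup>2\<bar> \<le> B\<^sub>D\<^sup>2" and "\<bar>(S s)\<^sup>2\<bar> \<le> B\<^sub>S\<^sup>2" and "\<bar>D s * S s\<bar> \<le> B\<^sub>D * B\<^sub>S" for s
    using power_mono[OF D_le D_nonneg, of s 2] power_mono[OF S_le S_nonneg, of s 2]
      mult_mono[OF D_le S_le order_trans[OF D_nonneg D_le] S_nonneg] D_nonneg S_nonneg
    by (simp_all add: abs_mult)
  then have D_int: "integrable path_law (\<lambda>s. (D s)\<^sup>2)" and S_int: "integrable path_law (\<lambda>s. (S s)\<^sup>2)"
    and DS_int: "integrable path_law (\<lambda>s. D s * S s)"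
    by (intro integrable_path_law_bounded; measurable; assumption)+
  have "(\<integral>s. inner (h_state n s - f0)
      ((Ld (eval_H kf (h_state n s) (xs (index s m))) (ys (index s m)) *\<^sub>R kf (xs (index s m))
         + lam *\<^sub>R h_state n s)
       - (Ld (f_state n s (xs (index s m))) (ys (index s m)) *\<^sub>R kf (xs (index s m))
         + lam *\<^sub>R h_state n s)) \<partial>path_law)
      \<le> (\<integral>s. Lip * (D s * S s) \<partial>path_law)"
    using DS_int D_nonneg S_nonneg Lip_nonneg inner_feature_error_le
    by (intro integral_mono') (auto simp: D_def S_def)
  also have "\<dots> \<le> Lip * (sqrt (\<integral>s. (D s)\<^sup>2 \<partial>path_law) * sqrt (\<integral>s. (S s)\<^sup>2 \<partial>path_law))"
    using D_int S_int D_nonneg S_nonneg Lip_nonneg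
    by (simp add: mult_left_mono integral_mult_le_sqrt_integral_sq)
  also have "\<dots> \<le> Lip * (sqrt (4 * M\<^sup>2 * \<gamma> / lam) * sqrt (\<integral>s. (S s)\<^sup>2 \<partial>path_law))"
    using integral_approx_gap_fresh_sq_le[OF assms] Lip_nonneg
    by (intro mult_left_mono mult_right_mono real_sqrt_le_mono) (auto simp: D_def)
  finally show ?thesis
    by (simp add: S_def mult.assoc)
qed

lemma sqrt_gap_variance_bound_le:
  assumes "1 \<le> \<phi>"
  shows "sqrt (4 * M\<^sup>2 * \<gamma> / lam) \<le> sqrt \<kappa> * sqrt (M\<^sup>2 * (sqrt \<kappa> + sqrt \<phi>)\<^sup>2 * \<gamma> / lam)"
proof -
  have "2 \<le> sqrt \<kappa> + sqrt \<phi>"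
    using real_sqrt_ge_one[OF one_le_kappa] real_sqrt_ge_one[OF assms] by linarith
  then have "4 \<le> (sqrt \<kappa> + sqrt \<phi>)\<^sup>2"
    using power_mono[of 2 "sqrt \<kappa> + sqrt \<phi>" 2] by simp
  then have "4 * (M\<^sup>2 * \<gamma> / lam) \<le> (sqrt \<kappa> + sqrt \<phi>)\<^sup>2 * (M\<^sup>2 * \<gamma> / lam)"
    using gamma_pos lam_pos by (intro mult_right_mono) auto
  then have "sqrt (4 * M\<^sup>2 * \<gamma> / lam) \<le> sqrt (M\<^sup>2 * (sqrt \<kappa> + sqrt \<phi>)\<^sup>2 * \<gamma> / lam)"
    by (simp add: ac_simps)
  also have "\<dots> \<le> sqrt \<kappa> * sqrt (M\<^sup>2 * (sqrt \<kappa> + sqrt \<phi>)\<^sup>2 * \<gamma> / lam)"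
    using mult_right_mono[OF real_sqrt_ge_one[OF one_le_kappa] real_sqrt_ge_zero] gamma_pos lam_pos
    by simp
  finally show ?thesis .
qed

end

theorem lemma5:
  fixes K :: "'a::euclidean_space \<Rightarrow> 'a \<Rightarrow> real"
    and kf :: "'a \<Rightarrow> 'h::{real_inner, complete_space}"
    and P :: "'a measure"
    and N :: nat and xs :: "nat \<Rightarrow> 'a" and ys :: "nat \<Rightarrow> 'b"
    and L Ld :: "real \<Rightarrow> 'b \<Rightarrow> real"
    and lam \<gamma> M Lip \<kappa> \<phi> C :: real
    and fstar :: 'h
    and t :: nat
  assumes N_pos: "N > 0"
    and K_cont: "continuous_on UNIV (\<lambda>(x, x'). K x x')"
    and K_sym: "\<forall>x x'. K x x' = K x' x"
    and K_shift: "shift_invariant_kernel K"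
    and K_pd: "pos_def_kernel K"
    and RKHS: "is_RKHS_feature K kf"
    and spectral: "spectral_measure P K"
    and lam_pos: "lam > 0"
    and L_convex: "\<forall>y. convex_on UNIV (\<lambda>u. L u y)"
    and L_deriv: "\<forall>u y. ((\<lambda>v. L v y) has_real_derivative Ld u y) (at u)"
    and fstar_opt: "\<forall>f::'h.
        (\<Sum>i<N. L (eval_H kf fstar (xs i)) (ys i)) / real N + lam / 2 * (norm fstar)\<^sup>2
      \<le> (\<Sum>i<N. L (eval_H kf f (xs i)) (ys i)) / real N + lam / 2 * (norm f)\<^sup>2"
    and Ld_bound: "\<forall>u y. \<bar>Ld u y\<bar> < M"
    and L_lip: "\<forall>u v y. \<bar>L u y - L v y\<bar> \<le> Lip * \<bar>u - v\<bar>"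
    and Ld_lip: "\<forall>u v y. \<bar>Ld u y - Ld v y\<bar> \<le> Lip * \<bar>u - v\<bar>"
    and K_bound: "\<forall>x x'. K x x' \<le> \<kappa>"
    and phi_bound: "\<forall>(\<omega>::'a) b (x::'a) x'. \<bar>rf_feat \<omega> b x * rf_feat \<omega> b x'\<bar> \<le> \<phi>"
    and gamma: "0 < \<gamma>" "\<gamma> < 1 / lam"
    and C_def: "C = sqrt (M\<^sup>2 * (sqrt \<kappa> + sqrt \<phi>)\<^sup>2 * \<gamma> / lam)"
    and t_pos: "t \<ge> 1"
  defines "f \<equiv> \<lambda>s. fst (dsgd_state Ld \<gamma> lam kf xs ys s (t - 1))"
    and "h \<equiv> \<lambda>s. snd (dsgd_state Ld \<gamma> lam kf xs ys s (t - 1))"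
    and "x \<equiv> \<lambda>s. xs (fst (s t))"
    and "y \<equiv> \<lambda>s. ys (fst (s t))"
  defines "g \<equiv> \<lambda>s. Ld (f s (x s)) (y s) *\<^sub>R kf (x s) + lam *\<^sub>R h s"
    and "ghat \<equiv> \<lambda>s. Ld (eval_H kf (h s) (x s)) (y s) *\<^sub>R kf (x s) + lam *\<^sub>R h s"
    and "gbar \<equiv> \<lambda>s. (1 / real N) *\<^sub>R (\<Sum>i<N. Ld (eval_H kf (h s) (xs i)) (ys i) *\<^sub>R kf (xs i))
                     + lam *\<^sub>R h s"
  defines "\<M> \<equiv> \<lambda>s. (norm (g s))\<^sup>2"
    and "\<N> \<equiv> \<lambda>s. inner (h s - fstar) (gbar s - ghat s)"
    and "\<R> \<equiv> \<lambda>s. inner (h s - fstar) (ghat s - g s)"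
    and "A \<equiv> \<lambda>s. (norm (h s - fstar))\<^sup>2"
  shows "(\<forall>s \<in> space (path_measure N P). \<M> s \<le> 4 * \<kappa> * M\<^sup>2)
       \<and> (\<integral>s. \<N> s \<partial>path_measure N P) = 0
       \<and> (\<integral>s. \<R> s \<partial>path_measure N P)
            \<le> sqrt \<kappa> * Lip * C * sqrt (\<integral>s. A s \<partial>path_measure N P)"
proof -
  interpret dsgd_model Ld \<gamma> lam kf xs ys K P N M \<kappa> Lip
    using N_pos spectral RKHS lam_pos gamma Ld_bound Ld_lip K_bound
    by unfold_locales (auto simp: field_simps less_imp_le)
  have t: "t - 1 < t"
    using t_pos by simp
  have "2 \<le> \<phi>"
    using phi_bound[rule_format, of 0 0 0 0] by (simp add: rf_feat_def)
  then have C_ge: "sqrt (4 * M\<^sup>2 * \<gamma> / lam) \<le> sqrt \<kappa> * C"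
    unfolding C_def by (intro sqrt_gap_variance_bound_le) simp
  have R_const: "Lip * sqrt (4 * M\<^sup>2 * \<gamma> / lam) * sqrt E \<le> sqrt \<kappa> * Lip * C * sqrt E"
    if "0 \<le> E" for E
    using mult_right_mono[OF C_ge, of "Lip * sqrt E"] Lip_nonneg that by (simp add: ac_simps)
  show ?thesis
    unfolding \<M>_def \<N>_def \<R>_def A_def g_def ghat_def gbar_def f_def h_def x_def y_def
    using norm_gradient_sq_le integral_sampling_noise_eq_0[OF t]
      order_trans[OF integral_feature_error_le[OF t] R_const]
    by simp
qed

end
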